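(* In the setting of the context, with $S(t)=\tilde S e^{(\beta/\gamma)\tilde R}\varphi^{-1}(t)$ and $S(\infty):=\lim_{t\to\infty}S(t)$, the following relation holds: \[ S(\infty)=\tilde S+\tilde E+\tilde I+\frac{\gamma}{\beta}\log\frac{S(\infty)}{\tilde S}. \]
   Context: Let $\beta,\gamma,\delta>0$ be constants and $\tilde S,\tilde E,\tilde I,\tilde R$ real numbers with $N:=\tilde S+\tilde E+\tilde I+\tilde R>0$. Standing assumptions: (A1) $\tilde I>0$; (A2) $\tilde E>(\gamma/\delta)\tilde I$; (A3) $\tilde S>\delta\tilde E/(\beta\tilde I)$; (A4) $\tilde R\ge 0$ and $N>\tilde S e^{(\beta/\gamma)\tilde R}+\tilde R$. Let $\alpha$ be the unique solution in $(\tilde R,N)$ of $x=N-\tilde S e^{(\beta/\gamma)\tilde R}e^{-(\beta/\gamma)x}$, and assume (A5) $\tilde S<(\gamma/\beta)e^{(\beta/\gamma)(\alpha-\tilde R)}$. Put $u_0:=e^{-(\beta/\gamma)\tilde R}$, $u_\infty:=e^{-(\beta/\gamma)\alpha}$. Let $\psi$ be the unique function, continuous and positive on $(u_\infty,u_0]$ and $C^1$ on $(u_\infty,u_0)$, satisfying $\psi'(u)\psi(u)-\frac{\gamma+\delta}{u}\psi(u)=-\delta\,\frac{\beta N-\beta\tilde S e^{(\beta/\gamma)\tilde R}u+\gamma\log u}{u}$ on $(u_\infty,u_0)$ and $\psi(u_0)=\beta\tilde I$. Let $\varphi(u):=\int_u^{u_0}\frac{d\xi}{\xi\psi(\xi)}$;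 $\varphi$ is a strictly decreasing continuous bijection from $(u_\infty,u_0]$ onto $[0,\infty)$, with inverse $\varphi^{-1}:[0,\infty)\to(u_\infty,u_0]$. *)

theory Defs
  imports "HOL-Analysis.Analysis"
begin

end

theory Submission
  imports Defs
begin

(* Put K = St e^((\<beta>/\<gamma>) Rt). The barrier f u = \<beta>N - \<beta>K u + \<gamma> ln u vanishes at uinf (this is the
   equation defining \<alpha>) and exceeds \<psi> u0 = \<beta> It at u0. Wherever \<psi> \<ge> f, the ODE gives
   \<psi>' \<ge> \<gamma>/u > f', so \<psi> stays below f on (uinf, u0]; concavity of ln then gives
   \<psi> u < (\<gamma>/uinf)(u - uinf). Hence 1/(\<xi> \<psi> \<xi>) is not integrable at uinf, \<phi> maps (uinf, u0]
   onto [0, \<infinity>), and \<phi>^-1 t tends to uinf. So S(\<infinity>) = K uinf = N - \<alpha>, and the equation defining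
   \<alpha> turns into the claimed relation. *)

lemma positive_if_DERIV_neg_where_nonpos:
  fixes g :: "real \<Rightarrow> real"
  assumes cont: "continuous_on {a<..b} g" and pos_b: "g b > 0"
    and deriv_neg: "\<And>x. x \<in> {a<..<b} \<Longrightarrow> g x \<le> 0 \<Longrightarrow> \<exists>D<0. (g has_real_derivative D) (at x)"
    and x: "x \<in> {a<..b}"
  shows "g x > 0"
proof (rule ccontr)
  assume "\<not> g x > 0"
  define Z where "Z = {v \<in> {x..b}. g v \<le> 0}"
  have "continuous_on {x..b} g"
    by (rule continuous_on_subset[OF cont]) (use x in auto)
  then have "closed Z"
    unfolding Z_def by (intro continuous_on_closed_Collect_le continuous_intros) auto
  moreover have "x \<in> Z" and "bdd_above Z"
    using \<open>\<not> g x > 0\<close> x unfolding Z_def by (auto intro: bdd_aboveI[of _ b])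
  ultimately have "Sup Z \<in> Z"
    using closed_contains_Sup by blast
  define z where "z = Sup Z"
  have "z \<in> {a<..<b}" and "g z \<le> 0"
    using \<open>Sup Z \<in> Z\<close> pos_b x unfolding z_def Z_def by (auto simp: order.order_iff_strict)
  have above_pos: "g v > 0" if "z < v" "v \<le> b" for v
    using cSup_upper[OF _ \<open>bdd_above Z\<close>, of v] that \<open>z \<in> {a<..<b}\<close> \<open>Sup Z \<in> Z\<close>
    unfolding z_def Z_def by force
  obtain D where "D < 0" and "(g has_real_derivative D) (at z)"
    using deriv_neg[OF \<open>z \<in> {a<..<b}\<close> \<open>g z \<le> 0\<close>] by blast
  then obtain d where "d > 0" and d: "\<And>h. h > 0 \<Longrightarrow> h < d \<Longrightarrow> g (z + h) < g z"
    using DERIV_neg_dec_right by blast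
  define h where "h = min (d / 2) (b - z)"
  have "h > 0" "h < d" "z + h \<le> b"
    using \<open>d > 0\<close> \<open>z \<in> {a<..<b}\<close> unfolding h_def by auto
  then show False
    using d above_pos[of "z + h"] \<open>g z \<le> 0\<close> by fastforce
qed

lemma ode_solution_below_barrier:
  fixes \<psi> f f' :: "real \<Rightarrow> real"
  assumes "0 \<le> a" "\<delta> \<ge> 0"
    and psi_cont: "continuous_on {a<..b} \<psi>"
    and psi_pos: "\<forall>u\<in>{a<..b}. \<psi> u > 0"
    and psi_diff: "\<forall>u\<in>{a<..<b}. \<psi> differentiable (at u)"
    and ode: "\<forall>u\<in>{a<..<b}. deriv \<psi> u * \<psi> u - (\<gamma> + \<delta>) / u * \<psi> u = - \<delta> * f u / u"
    and f_deriv: "\<And>u. u \<in> {a<..b} \<Longrightarrow> (f has_real_derivative f' u) (at u)"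
    and f'_less: "\<And>u. u \<in> {a<..<b} \<Longrightarrow> f' u < \<gamma> / u"
    and "\<psi> b < f b" and u: "u \<in> {a<..b}"
  shows "\<psi> u < f u"
proof -
  have "continuous_on {a<..b} f"
    using f_deriv by (meson DERIV_isCont continuous_at_imp_continuous_on)
  then have "continuous_on {a<..b} (\<lambda>v. f v - \<psi> v)"
    using psi_cont by (rule continuous_on_diff)
  moreover have "\<exists>D<0. ((\<lambda>v. f v - \<psi> v) has_real_derivative D) (at v)"
    if v: "v \<in> {a<..<b}" and "f v - \<psi> v \<le> 0" for v
  proof -
    have "v > 0" "\<psi> v > 0"
      using v \<open>0 \<le> a\<close> psi_pos by auto
    have "(deriv \<psi> v * \<psi> v - (\<gamma> + \<delta>) / v * \<psi> v) * v = - \<delta> * f v"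
      using bspec[OF ode v] \<open>v > 0\<close> by simp
    then have "deriv \<psi> v * \<psi> v * v = (\<gamma> + \<delta>) * \<psi> v - \<delta> * f v"
      using \<open>v > 0\<close> by (simp add: left_diff_distrib)
    also have "\<dots> \<ge> \<gamma> * \<psi> v"
      using \<open>f v - \<psi> v \<le> 0\<close> \<open>\<delta> \<ge> 0\<close> by (simp add: algebra_simps mult_left_mono)
    finally have "deriv \<psi> v \<ge> \<gamma> / v"
      using \<open>v > 0\<close> \<open>\<psi> v > 0\<close> by (simp add: field_simps)
    then have "f' v - deriv \<psi> v < 0"
      using f'_less[OF v] by simp
    moreover have "((\<lambda>v. f v - \<psi> v) has_real_derivative f' v - deriv \<psi> v) (at v)"
      using f_deriv psi_diff v by (auto intro!: DERIV_diff simp: DERIV_deriv_iff_real_differentiable)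
    ultimately show ?thesis
      by blast
  qed
  ultimately have "f u - \<psi> u > 0"
    using positive_if_DERIV_neg_where_nonpos[of a b "\<lambda>v. f v - \<psi> v"] \<open>\<psi> b < f b\<close> u by auto
  then show ?thesis
    by simp
qed

lemma seir_psi_lt_linear:
  fixes \<psi> :: "real \<Rightarrow> real"
  assumes "\<beta> > 0" "\<gamma> > 0" "\<delta> > 0" "K > 0"
    and a_def: "a = exp (- (\<beta> / \<gamma>) * \<alpha>)" and Ka: "K * a = N - \<alpha>"
    and psi_cont: "continuous_on {a<..b} \<psi>"
    and psi_pos: "\<forall>u\<in>{a<..b}. \<psi> u > 0"
    and psi_diff: "\<forall>u\<in>{a<..<b}. \<psi> differentiable (at u)"
    and ode: "\<forall>u\<in>{a<..<b}. deriv \<psi> u * \<psi> u - (\<gamma> + \<delta>) / u * \<psi> u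
      = - \<delta> * (\<beta> * N - \<beta> * K * u + \<gamma> * ln u) / u"
    and psi_b: "\<psi> b < \<beta> * N - \<beta> * K * b + \<gamma> * ln b"
    and u: "u \<in> {a<..b}"
  shows "\<psi> u < \<gamma> / a * (u - a)"
proof -
  have "a > 0"
    unfolding a_def by simp
  have "\<gamma> * ln a = - \<beta> * \<alpha>"
    using \<open>\<gamma> > 0\<close> unfolding a_def by simp
  then have root: "\<beta> * N - \<beta> * K * a + \<gamma> * ln a = 0"
    using Ka by (simp add: mult.assoc right_diff_distrib)
  have f_deriv: "((\<lambda>u. \<beta> * N - \<beta> * K * u + \<gamma> * ln u) has_real_derivative - \<beta> * K + \<gamma> / v) (at v)"
    if "v > 0" for v
    using that by (auto intro!: derivative_eq_intros)
  have "\<psi> u < \<beta> * N - \<beta> * K * u + \<gamma> * ln u"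
    by (rule ode_solution_below_barrier[OF _ _ psi_cont psi_pos psi_diff ode,
          where f' = "\<lambda>v. - \<beta> * K + \<gamma> / v"])
      (use f_deriv \<open>a > 0\<close> \<open>\<delta> > 0\<close> \<open>\<beta> > 0\<close> \<open>K > 0\<close> psi_b u in auto)
  also have "\<dots> = - \<beta> * K * (u - a) + \<gamma> * (ln u - ln a)"
    using root by (simp add: algebra_simps)
  also have "\<dots> \<le> \<gamma> * ((u - a) / a)"
  proof -
    have "\<gamma> * (ln u - ln a) \<le> \<gamma> * ((u - a) / a)"
      using ln_diff_le[of u a] u \<open>a > 0\<close> \<open>\<gamma> > 0\<close> by (intro mult_left_mono) auto
    moreover have "0 \<le> \<beta> * K * (u - a)"
      using u \<open>\<beta> > 0\<close> \<open>K > 0\<close> by simp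
    ultimately show ?thesis
      by linarith
  qed
  finally show ?thesis
    by simp
qed

lemma integral_ge_ln_if_ge_inverse:
  fixes h :: "real \<Rightarrow> real"
  assumes "a < u" "u \<le> v" and h_cont: "continuous_on {u..v} h"
    and h_ge: "\<And>\<xi>. \<xi> \<in> {u..v} \<Longrightarrow> c / (\<xi> - a) \<le> h \<xi>"
  shows "c * (ln (v - a) - ln (u - a)) \<le> integral {u..v} h"
proof -
  have "((\<lambda>\<xi>. c * ln (\<xi> - a)) has_real_derivative c / (\<xi> - a)) (at \<xi> within {u..v})"
    if "\<xi> \<in> {u..v}" for \<xi>
    using that \<open>a < u\<close> by (auto intro!: derivative_eq_intros)
  then have "((\<lambda>\<xi>. c / (\<xi> - a)) has_integral c * ln (v - a) - c * ln (u - a)) {u..v}"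
    using \<open>u \<le> v\<close> by (intro fundamental_theorem_of_calculus)
      (auto simp: has_real_derivative_iff_has_vector_derivative)
  moreover have "(h has_integral integral {u..v} h) {u..v}"
    using h_cont by (simp add: integrable_continuous_interval integrable_integral)
  ultimately have "c * ln (v - a) - c * ln (u - a) \<le> integral {u..v} h"
    by (rule has_integral_le) (use h_ge in auto)
  then show ?thesis
    by (simp add: right_diff_distrib)
qed

lemma the_inv_into_tendsto_at_top:
  fixes \<phi> :: "real \<Rightarrow> real"
  assumes cont: "\<And>x. a < x \<Longrightarrow> continuous_on {x..b} \<phi>"
    and decr: "\<And>u v. a < u \<Longrightarrow> u < v \<Longrightarrow> v \<le> b \<Longrightarrow> \<phi> v < \<phi> u"
    and "\<phi> b = 0" and unbounded: "\<And>T. \<exists>u\<in>{a<..b}. T \<le> \<phi> u"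
  shows "(the_inv_into {a<..b} \<phi> \<longlongrightarrow> a) at_top"
proof -
  define \<phi>' where "\<phi>' = the_inv_into {a<..b} \<phi>"
  have "inj_on \<phi> {a<..b}"
    by (rule inj_onI) (metis decr greaterThanAtMost_iff linorder_neq_iff less_irrefl)
  have inverse: "\<phi>' t \<in> {a<..b} \<and> \<phi> (\<phi>' t) = t" if "t \<ge> 0" for t
  proof -
    obtain w where w: "w \<in> {a<..b}" "t \<le> \<phi> w"
      using unbounded by blast
    then obtain u where "w \<le> u" "u \<le> b" "\<phi> u = t"
      using IVT2'[of \<phi> b t w] cont[of w] \<open>\<phi> b = 0\<close> \<open>t \<ge> 0\<close> by auto
    then show ?thesis
      using w the_inv_into_f_eq[OF \<open>inj_on \<phi> {a<..b}\<close>] unfolding \<phi>'_def by auto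
  qed
  show ?thesis
    unfolding \<phi>'_def[symmetric]
  proof (rule order_tendstoI)
    fix y assume "y < a"
    show "eventually (\<lambda>t. y < \<phi>' t) at_top"
      using eventually_ge_at_top[of 0] by eventually_elim (use inverse \<open>y < a\<close> in fastforce)
  next
    fix y assume "y > a"
    define w where "w = min y b"
    have w: "w \<in> {a<..b}"
      using \<open>y > a\<close> unbounded unfolding w_def by fastforce
    show "eventually (\<lambda>t. \<phi>' t < y) at_top"
      using eventually_gt_at_top[of "max 0 (\<phi> w)"]
    proof eventually_elim
      case (elim t)
      then have "\<phi>' t \<in> {a<..b}" "\<phi> w < \<phi> (\<phi>' t)"
        using inverse[of t] by auto
      then have "\<phi>' t < w"
        using decr[of w "\<phi>' t"] w by (cases "w < \<phi>' t"; cases "w = \<phi>' t") auto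
      then show ?case
        unfolding w_def by simp
    qed
  qed
qed

lemma the_inv_into_tail_integral_tendsto:
  fixes h :: "real \<Rightarrow> real"
  assumes "a < b" "c > 0" and h_cont: "continuous_on {a<..b} h"
    and h_ge: "\<And>\<xi>. \<xi> \<in> {a<..b} \<Longrightarrow> c / (\<xi> - a) \<le> h \<xi>"
  shows "(the_inv_into {a<..b} (\<lambda>u. integral {u..b} h) \<longlongrightarrow> a) at_top"
proof (rule the_inv_into_tendsto_at_top)
  have h_cont': "continuous_on {u..v} h" if "a < u" "v \<le> b" for u v
    by (rule continuous_on_subset[OF h_cont]) (use that in auto)
  have integral_ge: "c * (ln (v - a) - ln (u - a)) \<le> integral {u..v} h"
    if "a < u" "u \<le> v" "v \<le> b" for u v
    using that h_ge by (intro integral_ge_ln_if_ge_inverse h_cont') auto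
  show "continuous_on {x..b} (\<lambda>u. integral {u..b} h)" if "a < x" for x
    using indefinite_integral_continuous_1' integrable_continuous_interval h_cont' that by blast
  show "integral {v..b} h < integral {u..b} h" if "a < u" "u < v" "v \<le> b" for u v
  proof -
    have "integral {u..b} h = integral {u..v} h + integral {v..b} h"
      using that Henstock_Kurzweil_Integration.integral_combine[of u v b h]
        integrable_continuous_interval[OF h_cont'[of u b]]
      by simp
    moreover have "0 < c * (ln (v - a) - ln (u - a))"
      using that \<open>c > 0\<close> by simp
    ultimately show ?thesis
      using integral_ge[of u v] that by linarith
  qed
  show "integral {b..b} h = 0"
    by simp
  show "\<exists>u\<in>{a<..b}. T \<le> integral {u..b} h" for T
  proof
    define u where "u = a + (b - a) * exp (- max 0 T / c)"
    have "0 < (b - a) * exp (- max 0 T / c)" "(b - a) * exp (- max 0 T / c) \<le> b - a"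
      using \<open>a < b\<close> \<open>c > 0\<close> by (simp_all add: mult_left_le)
    then show u: "u \<in> {a<..b}"
      unfolding u_def greaterThanAtMost_iff by linarith
    have "T \<le> c * (ln (b - a) - ln (u - a))"
      using \<open>a < b\<close> \<open>c > 0\<close> unfolding u_def by (simp add: ln_mult)
    then show "T \<le> integral {u..b} h"
      using integral_ge[of u b] u by simp
  qed
qed

lemma the_inv_into_reciprocal_integral_tendsto:
  fixes \<psi> :: "real \<Rightarrow> real"
  assumes "0 \<le> a" "a < b" "C > 0"
    and psi_cont: "continuous_on {a<..b} \<psi>"
    and psi_pos: "\<forall>\<xi>\<in>{a<..b}. \<psi> \<xi> > 0"
    and psi_less: "\<And>\<xi>. \<xi> \<in> {a<..b} \<Longrightarrow> \<psi> \<xi> < C * (\<xi> - a)"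
  shows "(the_inv_into {a<..b} (\<lambda>u. integral {u..b} (\<lambda>\<xi>. 1 / (\<xi> * \<psi> \<xi>))) \<longlongrightarrow> a) at_top"
proof (rule the_inv_into_tail_integral_tendsto)
  show "continuous_on {a<..b} (\<lambda>\<xi>. 1 / (\<xi> * \<psi> \<xi>))"
    using psi_cont psi_pos \<open>0 \<le> a\<close> by (auto intro!: continuous_intros)
  show "1 / (b * C) / (\<xi> - a) \<le> 1 / (\<xi> * \<psi> \<xi>)" if \<xi>: "\<xi> \<in> {a<..b}" for \<xi>
  proof -
    have "\<psi> \<xi> > 0"
      using \<xi> psi_pos by blast
    then have "0 < \<xi> * \<psi> \<xi>"
      using \<xi> \<open>0 \<le> a\<close> by simp
    moreover have "\<xi> * \<psi> \<xi> \<le> b * (C * (\<xi> - a))"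
      using \<xi> \<open>\<psi> \<xi> > 0\<close> psi_less[OF \<xi>] \<open>0 \<le> a\<close> by (intro mult_mono) auto
    ultimately have "1 / (b * (C * (\<xi> - a))) \<le> 1 / (\<xi> * \<psi> \<xi>)"
      by (intro divide_left_mono) auto
    then show ?thesis
      by (simp add: mult.assoc)
  qed
qed (use assms in auto)

lemma final_size_relation:
  fixes \<beta> \<gamma> St Et It Rt N \<alpha> :: real
  assumes "\<beta> > 0" "\<gamma> > 0" "St > 0" and "N = St + Et + It + Rt"
    and "\<alpha> = N - St * exp ((\<beta> / \<gamma>) * Rt) * exp (- (\<beta> / \<gamma>) * \<alpha>)"
  defines "Sinf \<equiv> St * exp ((\<beta> / \<gamma>) * Rt) * exp (- (\<beta> / \<gamma>) * \<alpha>)"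
  shows "Sinf = St + Et + It + (\<gamma> / \<beta>) * ln (Sinf / St)"
proof -
  have "Sinf / St = exp ((\<beta> / \<gamma>) * Rt - (\<beta> / \<gamma>) * \<alpha>)"
    using \<open>St > 0\<close> unfolding Sinf_def by (simp add: exp_diff exp_minus field_simps)
  then have "(\<gamma> / \<beta>) * ln (Sinf / St) = Rt - \<alpha>"
    using \<open>\<beta> > 0\<close> \<open>\<gamma> > 0\<close> by (simp add: right_diff_distrib)
  moreover have "Sinf = N - \<alpha>"
    using assms(5) unfolding Sinf_def by simp
  ultimately show ?thesis
    using \<open>N = St + Et + It + Rt\<close> by simp
qed

theorem theorem12:
  fixes \<beta> \<gamma> \<delta> St Et It Rt N \<alpha> u0 uinf :: real
    and \<psi> \<phi> S :: "real \<Rightarrow> real"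
  assumes pos: "\<beta> > 0" "\<gamma> > 0" "\<delta> > 0"
    and N_def: "N = St + Et + It + Rt" and N_pos: "N > 0"
    and A1: "It > 0"
    and A2: "Et > (\<gamma> / \<delta>) * It"
    and A3: "St > \<delta> * Et / (\<beta> * It)"
    and A4: "Rt \<ge> 0" "N > St * exp ((\<beta> / \<gamma>) * Rt) + Rt"
    and alpha_mem: "\<alpha> \<in> {Rt<..<N}"
    and alpha_eq: "\<alpha> = N - St * exp ((\<beta> / \<gamma>) * Rt) * exp (- (\<beta> / \<gamma>) * \<alpha>)"
    and A5: "St < (\<gamma> / \<beta>) * exp ((\<beta> / \<gamma>) * (\<alpha> - Rt))"
    and u0_def: "u0 = exp (- (\<beta> / \<gamma>) * Rt)"
    and uinf_def: "uinf = exp (- (\<beta> / \<gamma>) * \<alpha>)"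
    and psi_cont: "continuous_on {uinf<..u0} \<psi>"
    and psi_pos: "\<forall>u\<in>{uinf<..u0}. \<psi> u > 0"
    and psi_diff: "\<forall>u\<in>{uinf<..<u0}. \<psi> differentiable (at u)"
    and psi_C1: "continuous_on {uinf<..<u0} (deriv \<psi>)"
    and psi_ode: "\<forall>u\<in>{uinf<..<u0}.
        deriv \<psi> u * \<psi> u - (\<gamma> + \<delta>) / u * \<psi> u
        = - \<delta> * (\<beta> * N - \<beta> * St * exp ((\<beta> / \<gamma>) * Rt) * u + \<gamma> * ln u) / u"
    and psi_init: "\<psi> u0 = \<beta> * It"
    and phi_def: "\<forall>u. \<phi> u = integral {u..u0} (\<lambda>\<xi>. 1 / (\<xi> * \<psi> \<xi>))"
    and S_def: "\<forall>t. S t = St * exp ((\<beta> / \<gamma>) * Rt) * the_inv_into {uinf<..u0} \<phi> t"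
  shows "\<exists>Sinf. (S \<longlongrightarrow> Sinf) at_top \<and>
           Sinf = St + Et + It + (\<gamma> / \<beta>) * ln (Sinf / St)"
proof -
  define K where "K = St * exp ((\<beta> / \<gamma>) * Rt)"
  have "Et > 0"
    using A1 A2 pos by (smt (verit) divide_pos_pos mult_pos_pos)
  then have "St > 0"
    using A1 A3 pos by (smt (verit) divide_pos_pos mult_pos_pos)
  then have "K > 0"
    unfolding K_def by simp
  have "0 < uinf" "uinf < u0"
    using alpha_mem pos unfolding uinf_def u0_def by (simp_all add: divide_strict_right_mono)
  have ode: "\<forall>u\<in>{uinf<..<u0}. deriv \<psi> u * \<psi> u - (\<gamma> + \<delta>) / u * \<psi> u
      = - \<delta> * (\<beta> * N - \<beta> * K * u + \<gamma> * ln u) / u"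
    using psi_ode unfolding K_def by (simp add: mult.assoc)
  have "K * uinf = N - \<alpha>"
    using alpha_eq unfolding K_def uinf_def by simp
  moreover have "\<psi> u0 < \<beta> * N - \<beta> * K * u0 + \<gamma> * ln u0"
    using psi_init N_def pos \<open>Et > 0\<close> unfolding K_def u0_def by (simp add: algebra_simps mult_exp_exp)
  ultimately have "\<psi> \<xi> < \<gamma> / uinf * (\<xi> - uinf)" if "\<xi> \<in> {uinf<..u0}" for \<xi>
    using seir_psi_lt_linear[OF pos \<open>K > 0\<close> uinf_def _ psi_cont psi_pos psi_diff ode _ that]
    by blast
  moreover have "\<phi> = (\<lambda>u. integral {u..u0} (\<lambda>\<xi>. 1 / (\<xi> * \<psi> \<xi>)))"
    using phi_def by auto
  ultimately have "(the_inv_into {uinf<..u0} \<phi> \<longlongrightarrow> uinf) at_top"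
    using the_inv_into_reciprocal_integral_tendsto[of uinf u0 "\<gamma> / uinf" \<psi>]
      \<open>0 < uinf\<close> \<open>uinf < u0\<close> pos psi_cont psi_pos by simp
  moreover have "S = (\<lambda>t. K * the_inv_into {uinf<..u0} \<phi> t)"
    using S_def unfolding K_def by auto
  ultimately have "(S \<longlongrightarrow> K * uinf) at_top"
    by (simp add: tendsto_mult_left)
  moreover have "K * uinf = St + Et + It + (\<gamma> / \<beta>) * ln (K * uinf / St)"
    using final_size_relation[OF pos(1,2) \<open>St > 0\<close> N_def alpha_eq] unfolding K_def uinf_def .
  ultimately show ?thesis
    by blast
qed

end
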